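(* Let $R$ be a DT ring and $a\in R$ with $a^2\in\Delta(R)$. Then $a\in\Delta(R)$. In particular, every nilpotent element of $R$ lies in $\Delta(R)$.
   Context: All rings are associative with identity; $U(R)$ is the group of units. $\Delta(R)=\{x\in R: x+u\in U(R)\text{ for all }u\in U(R)\}$. $\mathrm{Tr}(R)=\{x\in R: x^3=x\}$. A ring $R$ is a DT ring if every $r\in R$ can be written $r=e+d$ with $e\in\mathrm{Tr}(R)$ and $d\in\Delta(R)$. *)

theory Defs
  imports Main
begin

definition units :: "'a::ring_1 set" where
  "units = {u. \<exists>v. u * v = 1 \<and> v * u = 1}"

definition Delta :: "'a::ring_1 set" where
  "Delta = {x. \<forall>u\<in>units. x + u \<in> units}"

definition Tr :: "'a::ring_1 set" where
  "Tr = {x. x ^ 3 = x}"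

definition DT_ring :: "'a::ring_1 itself \<Rightarrow> bool" where
  "DT_ring _ \<longleftrightarrow> (\<forall>r::'a. \<exists>e d. r = e + d \<and> e \<in> Tr \<and> d \<in> Delta)"

end

theory Submission
  imports Defs
begin

text \<open>Write \<open>a = e + d\<close> with \<open>e\<^sup>3 = e\<close> and \<open>d \<in> \<Delta>(R)\<close>. If \<open>a\<^sup>2 \<in> \<Delta>(R)\<close> then
  \<open>1 - a\<^sup>2 = (1 - a)(1 + a) = (1 + a)(1 - a)\<close> is a unit, so \<open>1 \<plusminus> a\<close> are units, and adding
  \<open>\<mp>d \<in> \<Delta>(R)\<close> shows that \<open>1 \<plusminus> e\<close>, hence \<open>1 - e\<^sup>2\<close>, are units. As \<open>(1 - e\<^sup>2) e = e - e\<^sup>3 = 0\<close>,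
  we get \<open>e = 0\<close> and \<open>a = d \<in> \<Delta>(R)\<close>. A nilpotent \<open>a\<close> has \<open>a\<^bsup>2\<^sup>k\<^esup> = 0\<close> for some \<open>k\<close>, and
  taking square roots \<open>k\<close> times from \<open>0 \<in> \<Delta>(R)\<close> gives \<open>a \<in> \<Delta>(R)\<close>.\<close>

lemma units_one [simp]: "(1::'a::ring_1) \<in> units"
  unfolding units_def by auto

lemma units_uminus:
  assumes "(u::'a::ring_1) \<in> units"
  shows "- u \<in> units"
proof -
  obtain v where "u * v = 1" "v * u = 1" using assms unfolding units_def by blast
  then have "(- u) * (- v) = 1" "(- v) * (- u) = 1" by simp_all
  then show ?thesis unfolding units_def by blast
qed

lemma units_mult:
  assumes "(u::'a::ring_1) \<in> units" "w \<in> units"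
  shows "u * w \<in> units"
proof -
  obtain u' w' where "u * u' = 1" "u' * u = 1" "w * w' = 1" "w' * w = 1"
    using assms unfolding units_def by blast
  then have "(u * w) * (w' * u') = 1" "(w' * u') * (u * w) = 1"
    by (simp_all add: mult.assoc flip: mult.assoc[of w w' u'] mult.assoc[of u' u w])
  then show ?thesis unfolding units_def by blast
qed

text \<open>\<open>y v\<close> is a right and \<open>w y\<close> a left inverse of \<open>x\<close>, so they coincide.\<close>
lemma units_left_factor:
  assumes "(x::'a::ring_1) * y \<in> units" "y * x \<in> units"
  shows "x \<in> units"
proof -
  obtain v where v: "x * y * v = 1" using assms(1) unfolding units_def by blast
  obtain w where w: "w * (y * x) = 1" using assms(2) unfolding units_def by blast
  have "y * v = (w * (y * x)) * (y * v)" using w by simp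
  also have "\<dots> = (w * y) * (x * y * v)" by (simp add: mult.assoc)
  also have "\<dots> = w * y" using v by simp
  finally have "y * v = w * y" .
  then have "(y * v) * x = 1" using w by (simp add: mult.assoc)
  moreover have "x * (y * v) = 1" using v by (simp add: mult.assoc)
  ultimately show ?thesis unfolding units_def by blast
qed

lemma units_mult_eq_zero_cancel:
  assumes "(u::'a::ring_1) \<in> units" "u * x = 0"
  shows "x = 0"
proof -
  obtain v where "v * u = 1" using assms(1) unfolding units_def by blast
  then have "x = v * (u * x)" by (simp flip: mult.assoc)
  then show ?thesis using assms(2) by simp
qed

lemma Delta_zero [simp]: "(0::'a::ring_1) \<in> Delta"
  unfolding Delta_def by simp

lemma Delta_uminus:
  assumes "(x::'a::ring_1) \<in> Delta"
  shows "- x \<in> Delta"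
  unfolding Delta_def
proof (intro CollectI ballI)
  fix u :: 'a
  assume "u \<in> units"
  then have "x + - u \<in> units" using assms units_uminus unfolding Delta_def by blast
  then have "- (x + - u) \<in> units" by (rule units_uminus)
  then show "- x + u \<in> units" by simp
qed

lemma units_add_Delta: "(d::'a::ring_1) \<in> Delta \<Longrightarrow> u \<in> units \<Longrightarrow> u + d \<in> units"
  unfolding Delta_def by (metis add.commute mem_Collect_eq)

lemma units_one_minus_Delta: "(d::'a::ring_1) \<in> Delta \<Longrightarrow> 1 - d \<in> units"
  using units_add_Delta[OF Delta_uminus units_one] by simp

lemma units_one_minus_if_square_Delta:
  assumes "(a::'a::ring_1) ^ 2 \<in> Delta"
  shows "1 - a \<in> units"
proof (rule units_left_factor)
  have "(1 - a) * (1 + a) = 1 - a ^ 2" "(1 + a) * (1 - a) = 1 - a ^ 2"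
    by (simp_all add: algebra_simps power2_eq_square)
  then show "(1 - a) * (1 + a) \<in> units" "(1 + a) * (1 - a) \<in> units"
    using units_one_minus_Delta[OF assms] by simp_all
qed

lemma Tr_eq_zero_if_units_one_minus_square:
  assumes "(e::'a::ring_1) \<in> Tr" "1 - e ^ 2 \<in> units"
  shows "e = 0"
proof (rule units_mult_eq_zero_cancel[OF assms(2)])
  have "e ^ 3 = e" using assms(1) unfolding Tr_def by simp
  then show "(1 - e ^ 2) * e = 0"
    by (simp add: algebra_simps power2_eq_square power3_eq_cube)
qed

lemma DT_ring_Delta_if_square_Delta:
  assumes "DT_ring TYPE('a::ring_1)" "(a::'a) ^ 2 \<in> Delta"
  shows "a \<in> Delta"
proof -
  obtain e d where a: "a = e + d" and e: "e \<in> Tr" and d: "d \<in> Delta"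
    using assms(1) unfolding DT_ring_def by blast
  have "1 - a \<in> units" "1 - (- a) \<in> units"
    using assms(2) units_one_minus_if_square_Delta[of a] units_one_minus_if_square_Delta[of "- a"]
    by simp_all
  then have "(1 - a) + d \<in> units" "(1 + a) + - d \<in> units"
    using units_add_Delta[OF d] units_add_Delta[OF Delta_uminus[OF d]] by simp_all
  then have "1 - e \<in> units" "1 + e \<in> units"
    using a by (simp_all add: algebra_simps)
  then have "(1 - e) * (1 + e) \<in> units" by (rule units_mult)
  moreover have "(1 - e) * (1 + e) = 1 - e ^ 2"
    by (simp add: algebra_simps power2_eq_square)
  ultimately have "e = 0" using e Tr_eq_zero_if_units_one_minus_square by simp
  then show ?thesis using a d by simp
qed

lemma nilpotent_mem_if_closed_under_square_roots:
  assumes zero: "(0::'a::ring_1) \<in> S"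
    and sqrt: "\<And>a. a ^ 2 \<in> S \<Longrightarrow> a \<in> S"
    and nilpotent: "a ^ n = 0"
  shows "a \<in> S"
proof -
  have "a \<in> S" if "a ^ (2 ^ k) = 0" for a :: 'a and k
    using that
  proof (induction k arbitrary: a)
    case 0
    then show ?case using zero by simp
  next
    case (Suc k)
    have "(a ^ 2) ^ (2 ^ k) = a ^ (2 ^ Suc k)" by (simp add: power_mult)
    then show ?case using Suc sqrt by simp
  qed
  moreover have "a ^ (2 ^ n) = a ^ n * a ^ (2 ^ n - n)"
    by (simp flip: power_add)
  ultimately show ?thesis using nilpotent by simp
qed

theorem lemma2p4:
  assumes "DT_ring TYPE('a::ring_1)"
  shows "(\<forall>a::'a. a ^ 2 \<in> Delta \<longrightarrow> a \<in> Delta) \<and>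
         (\<forall>a::'a. (\<exists>n. a ^ n = 0) \<longrightarrow> a \<in> Delta)"
  using DT_ring_Delta_if_square_Delta[OF assms]
    nilpotent_mem_if_closed_under_square_roots[OF Delta_zero]
  by blast

end
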